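(* Let $\mathcal A=(S,R)$ be an argumentation network with $S\neq\varnothing$, $R\subseteq S\times S$, which is finitary (every $y\in S$ has finitely many attackers). Write $\mathrm{Attack}(y)=\{z\mid zRy\}$ and regard the elements of $S$ as atoms of the logic $\mathbf{CN}$. Let $$\Delta_{\mathcal A}=\{x\mid x\in S,\ \neg\exists y\,(yRx)\}\cup\{y\leftrightarrow \textstyle\bigwedge_{z\in \mathrm{Attack}(y)}Nz\mid y\in S\}\cup\{z\to Ny\mid zRy\}\cup\{(\textstyle\bigwedge_{z\in\mathrm{Attack}(y)}\neg z)\wedge(\bigvee_{z\in\mathrm{Attack}(y)}\neg Nz)\to \neg y\wedge\neg Ny\mid y\in S\}$$ (empty conjunction is $\top$, empty disjunction is $\bot$). Then the $\mathbf{CN}$-models of $\Delta_{\mathcal A}$ correspond exactly to the complete extensions of $\mathcal A$: (i) for every $\mathbf{CN}$-model $h$ of $\Delta_{\mathcal A}$, the function $\lambda_h:S\to\{\mathrm{in},\mathrm{out},\mathrm{und}\}$ given by $\lambda_h(x)=\mathrm{in}$ if $h(x)=1$, $\lambda_h(x)=\mathrm{out}$ if $h(Nx)=1$, and $\lambda_h(x)=\mathrm{und}$ if $h(x)=h(Nx)=0$, is a well-defined legitimate Caminada labelling of $\mathcal A$; and (ii) for every legitimate Caminada labelling $\lambda$ of $\mathcal A$, the assignment $h_\lambda$ with $h_\lambda(x)=1$ iff $\lambda(x)=\mathrm{in}$ and $h_\lambda(Nx)=1$ iff $\lambda(x)=\mathrm{out}$ (for $x\in S$) is a $\mathbf{CN}$-model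 of $\Delta_{\mathcal A}$.
   Context: The logic $\mathbf{CN}$: atoms are $q$ and $Nq$ for $q$ in a set of basic atoms (here containing $S$); formulas are built with classical connectives; a $\mathbf{CN}$-model is a classical $\{0,1\}$-assignment $h$ to all atoms $q,Nq$ with $h(Nq)=1\Rightarrow h(q)=0$, with classical satisfaction; $\Delta\vdash_{\mathbf{CN}}A$ iff $\Delta\cup\{Nq\to\neg q\}\vdash A$ classically. A legitimate Caminada labelling of $(S,R)$ is a function $\lambda:S\to\{\mathrm{in},\mathrm{out},\mathrm{und}\}$ such that for all $x$: (C1) $\lambda(x)=\mathrm{in}$ iff every $y$ with $yRx$ has $\lambda(y)=\mathrm{out}$ (in particular if $x$ has no attackers); (C2) $\lambda(x)=\mathrm{out}$ iff some $y$ with $yRx$ has $\lambda(y)=\mathrm{in}$; (C3) $\lambda(x)=\mathrm{und}$ iff no attacker of $x$ is labelled in and some attacker of $x$ is labelled und. Complete extensions are the sets $\{x\mid\lambda(x)=\mathrm{in}\}$ for legitimate labellings $\lambda$, and this gives a bijection between legitimate labellings and complete extensions. *)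

theory Defs
  imports Main
begin

datatype 'a cn_atom = P 'a | N 'a

datatype 'a fm =
    Atom "'a cn_atom"
  | Top | Bot
  | Not "'a fm"
  | And "'a fm" "'a fm"
  | Or "'a fm" "'a fm"
  | Imp "'a fm" "'a fm"
  | Iff "'a fm" "'a fm"
  | BigAnd "'a fm list"
  | BigOr "'a fm list"

fun sat :: "('a cn_atom \<Rightarrow> bool) \<Rightarrow> 'a fm \<Rightarrow> bool" where
  "sat h (Atom a) = h a"
| "sat h Top = True"
| "sat h Bot = False"
| "sat h (Not A) = (\<not> sat h A)"
| "sat h (And A B) = (sat h A \<and> sat h B)"
| "sat h (Or A B) = (sat h A \<or> sat h B)"
| "sat h (Imp A B) = (sat h A \<longrightarrow> sat h B)"
| "sat h (Iff A B) = (sat h A \<longleftrightarrow> sat h B)"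
| "sat h (BigAnd As) = (\<forall>A\<in>set As. sat h A)"
| "sat h (BigOr As) = (\<exists>A\<in>set As. sat h A)"

definition cn_model :: "('a cn_atom \<Rightarrow> bool) \<Rightarrow> bool" where
  "cn_model h \<longleftrightarrow> (\<forall>q. h (N q) \<longrightarrow> \<not> h (P q))"

definition cn_model_of :: "('a cn_atom \<Rightarrow> bool) \<Rightarrow> 'a fm set \<Rightarrow> bool" where
  "cn_model_of h \<Delta> \<longleftrightarrow> cn_model h \<and> (\<forall>A\<in>\<Delta>. sat h A)"

definition Attack :: "('a \<times> 'a) set \<Rightarrow> 'a \<Rightarrow> 'a set" where
  "Attack R y = {z. (z, y) \<in> R}"

definition finitary :: "'a set \<Rightarrow> ('a \<times> 'a) set \<Rightarrow> bool" where
  "finitary S R \<longleftrightarrow> (\<forall>y\<in>S. finite (Attack R y))"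

text \<open>Some list enumerating a (finite) set; used to form finite conjunctions/disjunctions.\<close>
definition list_of :: "'b set \<Rightarrow> 'b list" where
  "list_of A = (SOME xs. set xs = A)"

definition Delta :: "'a set \<Rightarrow> ('a \<times> 'a) set \<Rightarrow> 'a fm set" where
  "Delta S R =
     {Atom (P x) | x. x \<in> S \<and> \<not> (\<exists>y. (y, x) \<in> R)}
   \<union> {Iff (Atom (P y)) (BigAnd (map (\<lambda>z. Atom (N z)) (list_of (Attack R y)))) | y. y \<in> S}
   \<union> {Imp (Atom (P z)) (Atom (N y)) | z y. (z, y) \<in> R}
   \<union> {Imp (And (BigAnd (map (\<lambda>z. Not (Atom (P z))) (list_of (Attack R y))))
               (BigOr (map (\<lambda>z. Not (Atom (N z))) (list_of (Attack R y)))))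
          (And (Not (Atom (P y))) (Not (Atom (N y)))) | y. y \<in> S}"

datatype label = In | Out | Und

definition legit_labelling :: "'a set \<Rightarrow> ('a \<times> 'a) set \<Rightarrow> ('a \<Rightarrow> label) \<Rightarrow> bool" where
  "legit_labelling S R lab \<longleftrightarrow> (\<forall>x\<in>S.
      (lab x = In \<longleftrightarrow> (\<forall>y. (y, x) \<in> R \<longrightarrow> lab y = Out)) \<and>
      (lab x = Out \<longleftrightarrow> (\<exists>y. (y, x) \<in> R \<and> lab y = In)) \<and>
      (lab x = Und \<longleftrightarrow> (\<not> (\<exists>y. (y, x) \<in> R \<and> lab y = In)) \<and> (\<exists>y. (y, x) \<in> R \<and> lab y = Und)))"

text \<open>lambda_h; for x in S with CN-model h the three cases are mutually exclusive and exhaustive.\<close>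
definition lab_of :: "('a cn_atom \<Rightarrow> bool) \<Rightarrow> 'a \<Rightarrow> label" where
  "lab_of h x = (if h (P x) then In else if h (N x) then Out else Und)"

definition assign_of :: "'a set \<Rightarrow> ('a \<Rightarrow> label) \<Rightarrow> 'a cn_atom \<Rightarrow> bool" where
  "assign_of S lab a = (case a of P x \<Rightarrow> x \<in> S \<and> lab x = In | N x \<Rightarrow> x \<in> S \<and> lab x = Out)"

end

theory Submission
  imports Defs
begin

text \<open>Given the CN-axiom \<open>Nq \<rightarrow> \<not> q\<close>, the formulas of \<open>\<Delta>\<close> translate clause by clause
  into Caminada's conditions for the labelling that reads \<open>q\<close> as in, \<open>Nq\<close> as out and
  neither as und. The one condition not read off directly is that an out argument has an in
  attacker: otherwise either all its attackers are out, which forces it in and contradicts the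
  CN-axiom, or the last group of formulas of \<open>\<Delta>\<close> makes it und.\<close>

lemma set_list_of: "finite A \<Longrightarrow> set (list_of A) = A"
  unfolding list_of_def by (metis (mono_tags) finite_list someI_ex)

lemma set_list_of_Attack:
  assumes "finitary S R" "y \<in> S"
  shows "set (list_of (Attack R y)) = {z. (z, y) \<in> R}"
  using assms set_list_of unfolding finitary_def Attack_def by blast

definition Delta_semantics :: "'a set \<Rightarrow> ('a \<times> 'a) set \<Rightarrow> ('a cn_atom \<Rightarrow> bool) \<Rightarrow> bool" where
  "Delta_semantics S R h \<longleftrightarrow>
     (\<forall>x\<in>S. (\<nexists>y. (y, x) \<in> R) \<longrightarrow> h (P x))
   \<and> (\<forall>y\<in>S. h (P y) \<longleftrightarrow> (\<forall>z. (z, y) \<in> R \<longrightarrow> h (N z)))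
   \<and> (\<forall>z y. (z, y) \<in> R \<longrightarrow> h (P z) \<longrightarrow> h (N y))
   \<and> (\<forall>y\<in>S. (\<forall>z. (z, y) \<in> R \<longrightarrow> \<not> h (P z)) \<and> (\<exists>z. (z, y) \<in> R \<and> \<not> h (N z))
              \<longrightarrow> \<not> h (P y) \<and> \<not> h (N y))"

lemma sat_Delta_iff_Delta_semantics:
  assumes "finitary S R"
  shows "(\<forall>A\<in>Delta S R. sat h A) \<longleftrightarrow> Delta_semantics S R h"
proof -
  have "(\<forall>A\<in>Delta S R. sat h A) \<longleftrightarrow>
     (\<forall>x\<in>S. (\<nexists>y. (y, x) \<in> R) \<longrightarrow> sat h (Atom (P x)))
   \<and> (\<forall>y\<in>S. sat h (Iff (Atom (P y)) (BigAnd (map (\<lambda>z. Atom (N z)) (list_of (Attack R y))))))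
   \<and> (\<forall>z y. (z, y) \<in> R \<longrightarrow> sat h (Imp (Atom (P z)) (Atom (N y))))
   \<and> (\<forall>y\<in>S. sat h (Imp (And (BigAnd (map (\<lambda>z. Not (Atom (P z))) (list_of (Attack R y))))
               (BigOr (map (\<lambda>z. Not (Atom (N z))) (list_of (Attack R y)))))
          (And (Not (Atom (P y))) (Not (Atom (N y))))))"
    unfolding Delta_def ball_Un by blast
  also have "\<dots> \<longleftrightarrow> Delta_semantics S R h"
    unfolding Delta_semantics_def
    by (simp add: set_list_of_Attack[OF assms] cong: ball_cong_simp)
  finally show ?thesis .
qed

lemma N_iff_attacked_by_P:
  assumes "cn_model h" "Delta_semantics S R h" "x \<in> S"
  shows "h (N x) \<longleftrightarrow> (\<exists>y. (y, x) \<in> R \<and> h (P y))"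
proof
  assume Nx: "h (N x)"
  show "\<exists>y. (y, x) \<in> R \<and> h (P y)"
  proof (rule ccontr)
    assume no_P_attacker: "\<nexists>y. (y, x) \<in> R \<and> h (P y)"
    show False
    proof (cases "\<forall>z. (z, x) \<in> R \<longrightarrow> h (N z)")
      case True
      then have "h (P x)" using assms(2,3) unfolding Delta_semantics_def by blast
      then show False using Nx assms(1) unfolding cn_model_def by blast
    next
      case False
      then show False using no_P_attacker Nx assms(2,3) unfolding Delta_semantics_def by blast
    qed
  qed
qed (use assms(2) in \<open>auto simp: Delta_semantics_def\<close>)

lemma legit_labelling_lab_of:
  assumes "cn_model h" "Delta_semantics S R h"
  shows "legit_labelling S R (lab_of h)"
proof -
  have In: "lab_of h y = In \<longleftrightarrow> h (P y)"
    and Out: "lab_of h y = Out \<longleftrightarrow> h (N y)"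
    and Und: "lab_of h y = Und \<longleftrightarrow> \<not> h (P y) \<and> \<not> h (N y)" for y
    using assms(1) by (auto simp: lab_of_def cn_model_def)
  show ?thesis
    unfolding legit_labelling_def In Out Und
    using N_iff_attacked_by_P[OF assms] assms unfolding Delta_semantics_def cn_model_def
    by blast
qed

lemma cn_model_assign_of: "cn_model (assign_of S lab)"
  by (simp add: cn_model_def assign_of_def)

lemma Delta_semantics_assign_of:
  assumes "legit_labelling S R lab" "R \<subseteq> S \<times> S"
  shows "Delta_semantics S R (assign_of S lab)"
proof -
  have In: "lab x = In \<longleftrightarrow> (\<forall>y. (y, x) \<in> R \<longrightarrow> lab y = Out)"
    and Out: "lab x = Out \<longleftrightarrow> (\<exists>y. (y, x) \<in> R \<and> lab y = In)" if "x \<in> S" for x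
    using assms(1) that unfolding legit_labelling_def by blast+
  have attack_in_S: "(y, x) \<in> R \<Longrightarrow> y \<in> S \<and> x \<in> S" for x y
    using assms(2) by blast
  show ?thesis
    unfolding Delta_semantics_def assign_of_def cn_atom.case
    using In Out attack_in_S by (smt (verit) label.distinct)
qed

theorem theorem5:
  fixes S :: "'a set" and R :: "('a \<times> 'a) set"
  assumes "S \<noteq> {}" and "R \<subseteq> S \<times> S" and "finitary S R"
  shows "(\<forall>h. cn_model_of h (Delta S R) \<longrightarrow>
            (\<forall>x\<in>S. \<not> (h (P x) \<and> h (N x))) \<and> legit_labelling S R (lab_of h))
       \<and> (\<forall>lab. legit_labelling S R lab \<longrightarrow> cn_model_of (assign_of S lab) (Delta S R))"
proof (intro conjI allI impI)
  fix h
  assume "cn_model_of h (Delta S R)"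
  then have "cn_model h" "Delta_semantics S R h"
    unfolding cn_model_of_def sat_Delta_iff_Delta_semantics[OF assms(3)] by simp_all
  then show "\<forall>x\<in>S. \<not> (h (P x) \<and> h (N x))" "legit_labelling S R (lab_of h)"
    by (auto simp: cn_model_def intro: legit_labelling_lab_of)
next
  fix lab
  assume "legit_labelling S R lab"
  then show "cn_model_of (assign_of S lab) (Delta S R)"
    unfolding cn_model_of_def sat_Delta_iff_Delta_semantics[OF assms(3)]
    using cn_model_assign_of Delta_semantics_assign_of assms(2) by blast
qed

end
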